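(* Let $S$ be a separable metric space and let $T$ be a $\sigma$-compact, locally compact topological space. Then the topology of locally uniform weak convergence on $C(T;\mathbf{M}(S))$ is metrizable.
   Context: $\mathbf{M}(S)$ denotes the set of finite Borel measures on $S$, equipped with the weak topology (the coarsest topology making $\mu\mapsto\int f\,d\mu$ continuous for every bounded continuous $f:S\to\mathbb{R}$). $C(T;\mathbf{M}(S))$ is the set of weakly continuous maps $t\mapsto\mu_t$ from $T$ to $\mathbf{M}(S)$. The uniformity of locally uniform weak convergence on $C(T;\mathbf{M}(S))$ is the uniformity generated by the subbase consisting of the sets $V(K;f,\varepsilon)=\{((\mu_t)_{t\in T},(\nu_t)_{t\in T})\in C(T;\mathbf{M}(S))^2 : \sup_{t\in K}|\int f\,d\mu_t-\int f\,d\nu_t|<\varepsilon\}$, indexed by compact $K\subset T$, bounded continuous $f:S\to\mathbb{R}$, and $\varepsilon>0$; the topology of locally uniform weak convergence is the topology induced by this uniformity. A sequence converges in it iff $\lim_n\sup_{t\in K}|\int f\,d\mu^{(n)}_t-\int f\,d\mu_t|=0$ for every compact $K\subset T$ and bounded continuous $f$. *)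

theory Defs
  imports "HOL-Analysis.Analysis"
begin

definition bcont :: "('a::metric_space \<Rightarrow> real) \<Rightarrow> bool" where
  "bcont f \<longleftrightarrow> continuous_on UNIV f \<and> bounded (range f)"

definition finite_borel_measure :: "'a::metric_space measure \<Rightarrow> bool" where
  "finite_borel_measure M \<longleftrightarrow> sets M = sets borel \<and> finite_measure M"

definition sigma_compact_space :: "'b topology \<Rightarrow> bool" where
  "sigma_compact_space X \<longleftrightarrow>
     (\<exists>F. countable F \<and> (\<forall>K\<in>F. compactin X K) \<and> \<Union>F = topspace X)"

text \<open>Continuity into the weak topology (the initial topology of the maps
  mu |-> integral f dmu, f bounded continuous) unfolds to continuity of every
  t |-> integral f d(mu t).\<close>
definition wcont_paths :: "'b topology \<Rightarrow> ('b \<Rightarrow> 'a::metric_space measure) set" where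
  "wcont_paths X = {\<mu>. (\<forall>t\<in>topspace X. finite_borel_measure (\<mu> t))
      \<and> (\<forall>t. t \<notin> topspace X \<longrightarrow> \<mu> t = undefined)
      \<and> (\<forall>f. bcont f \<longrightarrow> continuous_map X euclideanreal (\<lambda>t. integral\<^sup>L (\<mu> t) f))}"

text \<open>The subbase entourages V(K; f, eps).  (For K empty the supremum is
  taken as -infinity / 0, so the condition holds.)\<close>
definition lu_subbase :: "'b topology \<Rightarrow> (('b \<Rightarrow> 'a::metric_space measure) \<times> ('b \<Rightarrow> 'a measure)) set set" where
  "lu_subbase X = {{(\<mu>, \<nu>) \<in> wcont_paths X \<times> wcont_paths X.
        K = {} \<or> (SUP t\<in>K. \<bar>integral\<^sup>L (\<mu> t) f - integral\<^sup>L (\<nu> t) f\<bar>) < \<epsilon>}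
      | K f \<epsilon>. compactin X K \<and> bcont f \<and> \<epsilon> > 0}"

definition lu_uniformity :: "'b topology \<Rightarrow> (('b \<Rightarrow> 'a::metric_space measure) \<times> ('b \<Rightarrow> 'a measure)) set set" where
  "lu_uniformity X = {E. E \<subseteq> wcont_paths X \<times> wcont_paths X \<and>
      (\<exists>F. finite F \<and> F \<subseteq> lu_subbase X \<and> (wcont_paths X \<times> wcont_paths X) \<inter> \<Inter>F \<subseteq> E)}"

definition lu_topology :: "'b topology \<Rightarrow> ('b \<Rightarrow> 'a::metric_space measure) topology" where
  "lu_topology X = topology (\<lambda>U. U \<subseteq> wcont_paths X \<and>
      (\<forall>\<mu>\<in>U. \<exists>E\<in>lu_uniformity X. {\<nu>. (\<mu>, \<nu>) \<in> E} \<subseteq> U))"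

end

theory Submission
  imports Defs
begin

text \<open>Choose countably many bounded continuous test functions g m on S that include the constant 1
  and approximate every nonnegative bounded continuous function from below in integral, for every
  finite measure (finite maxima of rational bumps centred at a dense sequence), and compact sets
  L n in T such that every compact set lies in some L n.  Then
    d mu nu = sum_j 2^-j * min 1 (sup_(t in L n) |int g m d(mu t) - int g m d(nu t)|),
  with j enumerating the pairs (n, m), is a metric on C(T; M(S)), as the g m determine a finite
  measure.  A d-ball around mu contains an entourage built from finitely many pairs (L n, g m).
  Conversely, near a single measure the integral of a bounded continuous f is controlled by
  finitely many g m; weak continuity of t |-> mu t and compactness make this control uniform on a
  compact K, so every subbasic entourage contains a d-ball.\<close>

section \<open>Bounded continuous functions and finite Borel measures\<close>

lemma bcont_borel_measurable: "bcont f \<Longrightarrow> sets M = sets borel \<Longrightarrow> f \<in> borel_measurable M"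
  unfolding bcont_def by (metis borel_measurable_continuous_onI measurable_cong_sets)

lemma bcont_absE:
  assumes "bcont f"
  obtains B where "B \<ge> 0" "\<And>x. \<bar>f x\<bar> \<le> B"
  using assms unfolding bcont_def bounded_iff by (metis abs_ge_zero order_trans rangeI real_norm_def)

lemma bcontI:
  assumes "continuous_on UNIV f" "\<And>x. \<bar>f x\<bar> \<le> B"
  shows "bcont f"
  using assms unfolding bcont_def bounded_iff by auto

lemma bcont_const: "bcont (\<lambda>_. c)"
  by (rule bcontI[where B="\<bar>c\<bar>"]) auto

lemma bcont_add:
  assumes "bcont f" "bcont g"
  shows "bcont (\<lambda>x. f x + g x)"
proof -
  obtain B C where B: "\<And>x. \<bar>f x\<bar> \<le> B" and C: "\<And>x. \<bar>g x\<bar> \<le> C"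
    using assms by (meson bcont_absE)
  have "\<bar>f x + g x\<bar> \<le> B + C" for x
    using B[of x] C[of x] by linarith
  then show ?thesis
    by (rule bcontI[rotated]) (use assms in \<open>auto simp: bcont_def intro!: continuous_intros\<close>)
qed

lemma bcont_uminus: "bcont f \<Longrightarrow> bcont (\<lambda>x. - f x)"
  unfolding bcont_def by (auto intro: continuous_intros simp: bounded_iff)

lemma bcont_max:
  assumes "bcont f" "bcont g"
  shows "bcont (\<lambda>x. max (f x) (g x))"
proof -
  obtain B C where B: "\<And>x. \<bar>f x\<bar> \<le> B" and C: "\<And>x. \<bar>g x\<bar> \<le> C"
    using assms by (meson bcont_absE)
  have "\<bar>max (f x) (g x)\<bar> \<le> B + C" for x
    using B[of x] C[of x] by linarith
  moreover have "continuous_on UNIV (\<lambda>x. max (f x) (g x))"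
    using assms unfolding bcont_def by (blast intro: continuous_on_max)
  ultimately show ?thesis
    by (rule bcontI[rotated])
qed

lemma integrable_bcont:
  assumes "finite_borel_measure M" "bcont f"
  shows "integrable M f"
proof -
  interpret finite_measure M
    using assms(1) unfolding finite_borel_measure_def by auto
  obtain B where "\<And>x. \<bar>f x\<bar> \<le> B"
    using assms(2) by (meson bcont_absE)
  with assms show ?thesis
    unfolding finite_borel_measure_def
    by (intro integrable_const_bound[where B=B] AE_I2) (auto simp: bcont_borel_measurable)
qed

lemma measure_closed_eq_if_integrals_eq:
  assumes M: "finite_borel_measure M" and N: "finite_borel_measure N"
    and eq: "\<And>f. bcont f \<Longrightarrow> integral\<^sup>L M f = integral\<^sup>L N f"
    and C: "closed (C :: 'a::metric_space set)"
  shows "measure M C = measure N C"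
proof (cases "C = {}")
  case False
  define s where "s n x = max 0 (1 - real (Suc n) * infdist x C)" for n x
  have bcont_s: "bcont (s n)" for n
    unfolding s_def by (rule bcontI[where B=1]) (auto intro!: continuous_intros simp: infdist_nonneg)
  have lim: "(\<lambda>n. s n x) \<longlonglongrightarrow> indicator C x" for x
  proof (cases "x \<in> C")
    case True
    then show ?thesis
      using C False in_closed_iff_infdist_zero by (simp add: s_def)
  next
    case out: False
    then have pos: "infdist x C > 0"
      using C False infdist_pos_not_in_closed by blast
    obtain n0 where n0: "1 / infdist x C < real n0"
      using reals_Archimedean2 by blast
    have "s n x = 0" if "n0 \<le> n" for n
    proof -
      have "1 / infdist x C < real (Suc n)" using n0 that by linarith
      then have "1 < real (Suc n) * infdist x C" using pos by (simp add: field_simps)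
      then show ?thesis by (simp add: s_def)
    qed
    then have "eventually (\<lambda>n. s n x = 0) sequentially"
      unfolding eventually_sequentially by blast
    then show ?thesis
      using out by (simp add: tendsto_eventually)
  qed
  have "(\<lambda>n. integral\<^sup>L L (s n)) \<longlonglongrightarrow> measure L C" if L: "finite_borel_measure L" for L
  proof -
    interpret finite_measure L
      using L unfolding finite_borel_measure_def by auto
    have sL: "sets L = sets borel" "C \<in> sets L"
      using L C unfolding finite_borel_measure_def by auto
    have "(\<lambda>n. integral\<^sup>L L (s n)) \<longlonglongrightarrow> integral\<^sup>L L (indicator C)"
      by (rule integral_dominated_convergence[where w="\<lambda>_. 1"])
        (use sL bcont_borel_measurable[OF bcont_s] lim in \<open>auto simp: s_def infdist_nonneg\<close>)
    then show ?thesis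
      using sL by simp
  qed
  from this[OF M] this[OF N] show ?thesis
    unfolding eq[OF bcont_s] by (rule LIMSEQ_unique)
qed simp

lemma finite_borel_measure_eqI:
  assumes M: "finite_borel_measure M" and N: "finite_borel_measure (N :: 'a::metric_space measure)"
    and eq: "\<And>f. bcont f \<Longrightarrow> integral\<^sup>L M f = integral\<^sup>L N f"
  shows "M = N"
proof -
  interpret M: finite_measure M using M unfolding finite_borel_measure_def by auto
  interpret N: finite_measure N using N unfolding finite_borel_measure_def by auto
  have sets: "sets M = sets borel" "sets N = sets borel"
    using M N unfolding finite_borel_measure_def by auto
  have "sets (borel :: 'a measure) = sigma_sets UNIV (Collect closed)"
    by (subst borel_eq_closed) (simp add: sets_measure_of)
  then show ?thesis
  proof (intro measure_eqI_generator_eq[where E="Collect closed" and \<Omega>=UNIV and A="\<lambda>_. UNIV"])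
    show "Int_stable (Collect closed :: 'a set set)"
      by (auto simp: Int_stable_def closed_Int)
    show "emeasure M C = emeasure N C" if "C \<in> Collect closed" for C
      using that measure_closed_eq_if_integrals_eq[OF M N eq] sets
      by (simp add: M.emeasure_eq_measure N.emeasure_eq_measure)
  qed (use sets in auto)
qed

section \<open>A countable lower-approximating family of test functions\<close>

text \<open>Countably many test functions from which the weak topology of the finite Borel measures
  can be read off (see lower_approximating_integral_close below).\<close>
definition lower_approximating :: "(nat \<Rightarrow> 'a::metric_space \<Rightarrow> real) \<Rightarrow> bool" where
  "lower_approximating g \<longleftrightarrow> (\<forall>m. bcont (g m)) \<and> (\<exists>m. g m = (\<lambda>_. 1)) \<and>
     (\<forall>\<phi> M \<eta>. bcont \<phi> \<and> (\<forall>x. 0 \<le> \<phi> x) \<and> finite_borel_measure M \<and> \<eta> > 0 \<longrightarrow>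
        (\<exists>m. (\<forall>x. g m x \<le> \<phi> x) \<and> integral\<^sup>L M \<phi> - \<eta> < integral\<^sup>L M (g m)))"

definition bump :: "'a::metric_space \<Rightarrow> real \<Rightarrow> real \<Rightarrow> 'a \<Rightarrow> real" where
  "bump x q r y = q * max 0 (1 - dist y x / r)"

lemma bcont_bump:
  assumes "r > 0"
  shows "bcont (bump x q r)"
proof (rule bcontI[where B="\<bar>q\<bar>"])
  show "continuous_on UNIV (bump x q r)"
    unfolding bump_def using assms by (intro continuous_intros) auto
  show "\<bar>bump x q r y\<bar> \<le> \<bar>q\<bar>" for y
    unfolding bump_def abs_mult using assms by (intro mult_left_le) auto
qed

lemma bump_le:
  assumes "q \<ge> 0" "r > 0" "\<And>z. 0 \<le> \<phi> z" "\<And>z. dist z x < r \<Longrightarrow> q \<le> \<phi> z"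
  shows "bump x q r z \<le> \<phi> z"
proof (cases "dist z x < r")
  case True
  have "bump x q r z \<le> q"
    unfolding bump_def using assms(1,2) by (intro mult_left_le) auto
  with assms(4)[OF True] show ?thesis by linarith
next
  case False
  then have "bump x q r z = 0"
    using assms(2) by (simp add: bump_def field_simps)
  with assms(3) show ?thesis by simp
qed

lemma bump_ge: "q \<ge> 0 \<Longrightarrow> q - q * (dist y x / r) \<le> bump x q r y"
  unfolding bump_def using mult_left_mono[OF max.cobounded2, of q "1 - dist y x / r" 0]
  by (simp add: right_diff_distrib)

text \<open>Rational heights and radii 1 / (l + 1) keep this family countable.\<close>
fun bump_max :: "(nat \<Rightarrow> 'a::metric_space) \<Rightarrow> (nat \<times> rat \<times> nat) list \<Rightarrow> 'a \<Rightarrow> real" where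
  "bump_max c [] y = 0"
| "bump_max c ((k, q, l) # bs) y = max (bump (c k) (of_rat q) (1 / real (Suc l)) y) (bump_max c bs y)"

lemma bump_max_nonneg: "0 \<le> bump_max c bs y"
  by (induction c bs y rule: bump_max.induct) (auto simp: le_max_iff_disj)

lemma bump_max_append: "bump_max c (bs @ bs') y = max (bump_max c bs y) (bump_max c bs' y)"
  by (induction c bs y rule: bump_max.induct) (auto simp: max.assoc bump_max_nonneg max_absorb2)

lemma bcont_bump_max: "bcont (bump_max c bs)"
proof (induction bs)
  case Nil
  then show ?case using bcont_const[of 0] by (simp add: fun_eq_iff)
next
  case (Cons b bs)
  then show ?case
    by (cases b) (simp add: bcont_max bcont_bump del: of_nat_Suc)
qed

lemma bump_max_approx_point:
  assumes dense: "\<And>y e. e > 0 \<Longrightarrow> \<exists>k. dist y (c k) < e"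
    and \<phi>: "continuous_on UNIV \<phi>" "\<And>z. 0 \<le> \<phi> z" and e: "e > 0"
  obtains bs where "\<And>z. bump_max c bs z \<le> \<phi> z" "\<phi> y - e < bump_max c bs y"
proof (cases "\<phi> y < e")
  case True
  then show ?thesis using that[of "[]"] \<phi>(2) by simp
next
  case False
  obtain q where "q \<in> \<rat>" and q: "\<phi> y - e / 2 < q" "q < \<phi> y"
    using Rats_dense_in_real[of "\<phi> y - e / 2" "\<phi> y"] e by auto
  then obtain q' where q': "q = of_rat q'" by (auto elim: Rats_cases)
  have "q > 0" using q False e by linarith
  obtain \<rho> where "\<rho> > 0" and \<rho>: "\<And>z. dist z y < \<rho> \<Longrightarrow> dist (\<phi> z) (\<phi> y) < \<phi> y - q"
    using \<phi>(1) q(2) unfolding continuous_on_iff by (metis UNIV_I diff_gt_0_iff_gt)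
  obtain l where l: "1 / real (Suc l) < \<rho> / 2"
    using \<open>\<rho> > 0\<close> by (metis half_gt_zero_iff nat_approx_posE of_nat_Suc)
  define r where "r = 1 / real (Suc l)"
  have "r > 0" by (simp add: r_def)
  obtain k where k: "dist y (c k) < min r (r * e / (2 * q))"
    using dense[of "min r (r * e / (2 * q))"] \<open>r > 0\<close> \<open>q > 0\<close> e by auto
  have below: "bump (c k) q r z \<le> \<phi> z" for z
  proof (rule bump_le)
    show "q \<le> \<phi> z" if "dist z (c k) < r" for z
    proof -
      have "dist z y \<le> dist z (c k) + dist y (c k)" by (rule dist_triangle2)
      also have "\<dots> < \<rho>" using that k l unfolding r_def by linarith
      finally show ?thesis using \<rho> by (fastforce simp: dist_real_def)
    qed
  qed (use \<open>q > 0\<close> \<open>r > 0\<close> \<phi>(2) in auto)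
  have "q * (dist y (c k) / r) < q * (e / (2 * q))"
    using k \<open>r > 0\<close> \<open>q > 0\<close> by (intro mult_strict_left_mono) (auto simp: field_simps)
  with bump_ge[of q y "c k" r] \<open>q > 0\<close> q(1) have "\<phi> y - e < bump (c k) q r y"
    by simp
  moreover have "bump_max c [(k, q', l)] = bump (c k) q r"
    using \<open>q > 0\<close> by (simp add: fun_eq_iff q' r_def bump_def)
  ultimately show ?thesis
    using that[of "[(k, q', l)]"] below by simp
qed

lemma bump_max_increasing_approx:
  assumes dense: "\<And>y e. e > 0 \<Longrightarrow> \<exists>k. dist y (c k) < e"
    and \<phi>: "continuous_on UNIV \<phi>" "\<And>z. 0 \<le> \<phi> z"
  obtains h where "\<And>n z. bump_max c (h n) z \<le> \<phi> z" "\<And>z. (\<lambda>n. bump_max c (h n) z) \<longlonglongrightarrow> \<phi> z"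
proof -
  define S where "S = {bs. \<forall>z. bump_max c bs z \<le> \<phi> z}"
  have "[] \<in> S" using \<phi>(2) by (simp add: S_def)
  define s where "s = from_nat_into S"
  have s: "s n \<in> S" for n
    unfolding s_def using \<open>[] \<in> S\<close> by (auto intro: from_nat_into)
  have onto: "\<exists>n. s n = bs" if "bs \<in> S" for bs
    unfolding s_def using from_nat_into_surj[OF countableI_type that] .
  define h where "h n = concat (map s [0..<Suc n])" for n
  have h_0: "h 0 = s 0" and h_Suc: "h (Suc n) = h n @ s (Suc n)" for n
    by (simp_all add: h_def)
  have below: "bump_max c (h n) z \<le> \<phi> z" for n z
    by (induction n) (use s in \<open>auto simp: h_0 h_Suc bump_max_append S_def\<close>)
  have above: "bump_max c (s i) z \<le> bump_max c (h n) z" if "i \<le> n" for i n z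
    using that
  proof (induction n)
    case (Suc n)
    show ?case
    proof (cases "i = Suc n")
      case False
      with Suc.prems have "i \<le> n" by simp
      with Suc.IH show ?thesis by (simp add: h_Suc bump_max_append)
    qed (simp add: h_Suc bump_max_append)
  qed (simp add: h_0)
  have "(\<lambda>n. bump_max c (h n) z) \<longlonglongrightarrow> \<phi> z" for z
    unfolding lim_sequentially
  proof (intro allI impI)
    fix e :: real assume "e > 0"
    obtain bs where "\<And>w. bump_max c bs w \<le> \<phi> w" "\<phi> z - e < bump_max c bs z"
      using bump_max_approx_point[OF dense \<phi> \<open>e > 0\<close>, where y=z] by blast
    then have "bs \<in> S" "\<phi> z - e < bump_max c bs z"
      by (auto simp: S_def)
    then obtain i where i: "\<phi> z - e < bump_max c (s i) z" using onto by blast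
    show "\<exists>N. \<forall>n\<ge>N. dist (bump_max c (h n) z) (\<phi> z) < e"
    proof (intro exI allI impI)
      fix n assume "i \<le> n"
      with i above[of i n z] have "\<phi> z - e < bump_max c (h n) z"
        by linarith
      with below[of n z] show "dist (bump_max c (h n) z) (\<phi> z) < e"
        by (simp add: dist_real_def abs_diff_less_iff)
    qed
  qed
  with below that show ?thesis by blast
qed

lemma bump_max_lower_approx_integral:
  assumes dense: "\<And>y e. e > 0 \<Longrightarrow> \<exists>k. dist y (c k) < e"
    and \<phi>: "bcont \<phi>" "\<And>z. 0 \<le> \<phi> z" and M: "finite_borel_measure M" and "\<eta> > 0"
  obtains bs where "\<And>z. bump_max c bs z \<le> \<phi> z"
    "integral\<^sup>L M \<phi> - \<eta> < integral\<^sup>L M (bump_max c bs)"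
proof -
  obtain h where below: "\<And>n z. bump_max c (h n) z \<le> \<phi> z"
    and lim: "\<And>z. (\<lambda>n. bump_max c (h n) z) \<longlonglongrightarrow> \<phi> z"
    by (rule bump_max_increasing_approx[where c=c and \<phi>=\<phi>]) (use dense \<phi> in \<open>auto simp: bcont_def\<close>)
  obtain B where B: "\<And>z. \<bar>\<phi> z\<bar> \<le> B"
    using \<phi>(1) by (meson bcont_absE)
  have dominated: "\<bar>bump_max c (h n) z\<bar> \<le> B" for n z
    using below[of n z] B[of z] bump_max_nonneg[of c "h n" z] by simp
  interpret finite_measure M
    using M unfolding finite_borel_measure_def by auto
  have sets: "sets M = sets borel"
    using M unfolding finite_borel_measure_def by auto
  have "(\<lambda>n. integral\<^sup>L M (bump_max c (h n))) \<longlonglongrightarrow> integral\<^sup>L M \<phi>"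
    by (rule integral_dominated_convergence[where w="\<lambda>_. B"])
      (use bcont_borel_measurable[OF \<phi>(1) sets] bcont_borel_measurable[OF bcont_bump_max sets]
        lim dominated in auto)
  then obtain n where "dist (integral\<^sup>L M (bump_max c (h n))) (integral\<^sup>L M \<phi>) < \<eta>"
    using \<open>\<eta> > 0\<close> unfolding lim_sequentially by blast
  then have "integral\<^sup>L M \<phi> - \<eta> < integral\<^sup>L M (bump_max c (h n))"
    by (simp add: dist_real_def abs_diff_less_iff)
  with below show ?thesis
    by (rule that)
qed

lemma separable_space_dense_seqE:
  assumes "separable_space (euclidean :: 'a::metric_space topology)"
  obtains c :: "nat \<Rightarrow> 'a::metric_space" where "\<And>y e. e > 0 \<Longrightarrow> \<exists>k. dist y (c k) < e"
proof -
  obtain D :: "'a set" where D: "countable D" "closure D = UNIV"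
    using assms unfolding separable_space_def by auto
  show ?thesis
  proof (rule that[of "from_nat_into D"])
    fix y :: 'a and e :: real
    assume "e > 0"
    then obtain x where "x \<in> D" "dist x y < e"
      using D(2) closure_approachable[of y D] by blast
    moreover obtain k where "from_nat_into D k = x"
      using from_nat_into_surj[OF D(1) \<open>x \<in> D\<close>] by blast
    ultimately show "\<exists>k. dist y (from_nat_into D k) < e"
      by (auto simp: dist_commute)
  qed
qed

lemma separable_lower_approximating:
  assumes "separable_space (euclidean :: 'a::metric_space topology)"
  obtains g :: "nat \<Rightarrow> 'a::metric_space \<Rightarrow> real" where "lower_approximating g"
proof -
  obtain c :: "nat \<Rightarrow> 'a" where dense: "\<And>y e. e > 0 \<Longrightarrow> \<exists>k. dist y (c k) < e"
    using separable_space_dense_seqE[OF assms] by blast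
  define G where "G = insert (\<lambda>_. 1) (range (bump_max c))"
  have "countable G"
    unfolding G_def by (simp add: countable_image)
  then have range_g: "range (from_nat_into G) = G"
    by (intro range_from_nat_into) (auto simp: G_def)
  have "lower_approximating (from_nat_into G)"
    unfolding lower_approximating_def
  proof (intro conjI allI impI)
    show "bcont (from_nat_into G m)" for m
    proof -
      have "from_nat_into G m \<in> G" using range_g by blast
      then show ?thesis by (auto simp: G_def bcont_const bcont_bump_max)
    qed
    show "\<exists>m. from_nat_into G m = (\<lambda>_. 1)"
      using range_g by (metis G_def insertI1 rangeE)
    fix \<phi> :: "'a \<Rightarrow> real" and M :: "'a measure" and \<eta> :: real
    assume "bcont \<phi> \<and> (\<forall>x. 0 \<le> \<phi> x) \<and> finite_borel_measure M \<and> \<eta> > 0"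
    then obtain bs where bs: "\<And>z. bump_max c bs z \<le> \<phi> z"
      "integral\<^sup>L M \<phi> - \<eta> < integral\<^sup>L M (bump_max c bs)"
      using bump_max_lower_approx_integral[OF dense] by blast
    moreover obtain m where "from_nat_into G m = bump_max c bs"
      using range_g by (metis G_def insertCI rangeE rangeI)
    ultimately show "\<exists>m. (\<forall>x. from_nat_into G m x \<le> \<phi> x) \<and>
        integral\<^sup>L M \<phi> - \<eta> < integral\<^sup>L M (from_nat_into G m)"
      by (intro exI[of _ m]) simp
  qed
  with that show ?thesis .
qed

lemma lower_approximating_integral_lower_bound:
  assumes g: "lower_approximating g" and M0: "finite_borel_measure M0"
    and f: "bcont f" and "\<epsilon> > 0"
  obtains A \<delta> where "finite A" "\<delta> > 0"
    "\<And>M. finite_borel_measure M \<Longrightarrow>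
       (\<And>m. m \<in> A \<Longrightarrow> \<bar>integral\<^sup>L M (g m) - integral\<^sup>L M0 (g m)\<bar> < \<delta>) \<Longrightarrow>
       integral\<^sup>L M0 f - \<epsilon> < integral\<^sup>L M f"
proof -
  obtain B where "B \<ge> 0" and B: "\<And>x. \<bar>f x\<bar> \<le> B"
    using bcont_absE[OF f] by blast
  define \<eta> where "\<eta> = \<epsilon> / (B + 2)"
  have "\<eta> > 0" and "(B + 2) * \<eta> = \<epsilon>"
    using \<open>\<epsilon> > 0\<close> \<open>B \<ge> 0\<close> by (simp_all add: \<eta>_def)
  txt \<open>Approximate f + B from below; the test function 1 controls the total masses.\<close>
  have "0 \<le> f x + B" for x
    using B[of x] by linarith
  with bcont_add[OF f bcont_const] obtain m1 where m1: "\<And>x. g m1 x \<le> f x + B"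
    "integral\<^sup>L M0 (\<lambda>x. f x + B) - \<eta> < integral\<^sup>L M0 (g m1)"
    using g M0 \<open>\<eta> > 0\<close> unfolding lower_approximating_def by blast
  obtain m0 where m0: "g m0 = (\<lambda>_. 1)"
    using g unfolding lower_approximating_def by auto
  have integral_shift: "integral\<^sup>L L (\<lambda>x. f x + B) = integral\<^sup>L L f + B * measure L (space L)"
    if "finite_borel_measure L" for L
    using integrable_bcont[OF that f] integrable_bcont[OF that bcont_const] by simp
  show ?thesis
  proof (rule that[of "{m0, m1}" \<eta>])
    fix M
    assume M: "finite_borel_measure M"
      and close: "\<And>m. m \<in> {m0, m1} \<Longrightarrow> \<bar>integral\<^sup>L M (g m) - integral\<^sup>L M0 (g m)\<bar> < \<eta>"
    have "\<bar>measure M (space M) - measure M0 (space M0)\<bar> < \<eta>"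
      using close[of m0] by (simp add: m0)
    then have mass: "B * measure M (space M) \<le> B * measure M0 (space M0) + B * \<eta>"
      using \<open>B \<ge> 0\<close> unfolding distrib_left[symmetric]
      by (intro mult_left_mono) (auto simp: abs_diff_less_iff)
    have "integral\<^sup>L M (g m1) \<le> integral\<^sup>L M (\<lambda>x. f x + B)"
      using m1(1) integrable_bcont[OF M] bcont_add[OF f bcont_const] g
      unfolding lower_approximating_def by (intro integral_mono) auto
    with close[of m1] m1(2) mass integral_shift[OF M] integral_shift[OF M0]
      \<open>(B + 2) * \<eta> = \<epsilon>\<close>
    show "integral\<^sup>L M0 f - \<epsilon> < integral\<^sup>L M f"
      by (simp add: algebra_simps abs_diff_less_iff)
  qed (use \<open>\<eta> > 0\<close> in auto)
qed

lemma lower_approximating_integral_close: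
  assumes g: "lower_approximating g" and M0: "finite_borel_measure M0"
    and f: "bcont f" and "\<epsilon> > 0"
  obtains A \<delta> where "finite A" "\<delta> > 0"
    "\<And>M. finite_borel_measure M \<Longrightarrow>
       (\<And>m. m \<in> A \<Longrightarrow> \<bar>integral\<^sup>L M (g m) - integral\<^sup>L M0 (g m)\<bar> < \<delta>) \<Longrightarrow>
       \<bar>integral\<^sup>L M f - integral\<^sup>L M0 f\<bar> < \<epsilon>"
proof -
  obtain A1 \<delta>1 where A1: "finite A1" "\<delta>1 > 0"
    "\<And>M. finite_borel_measure M \<Longrightarrow>
       (\<And>m. m \<in> A1 \<Longrightarrow> \<bar>integral\<^sup>L M (g m) - integral\<^sup>L M0 (g m)\<bar> < \<delta>1) \<Longrightarrow>
       integral\<^sup>L M0 f - \<epsilon> < integral\<^sup>L M f"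
    using lower_approximating_integral_lower_bound[OF g M0 f \<open>\<epsilon> > 0\<close>] by blast
  obtain A2 \<delta>2 where A2: "finite A2" "\<delta>2 > 0"
    "\<And>M. finite_borel_measure M \<Longrightarrow>
       (\<And>m. m \<in> A2 \<Longrightarrow> \<bar>integral\<^sup>L M (g m) - integral\<^sup>L M0 (g m)\<bar> < \<delta>2) \<Longrightarrow>
       integral\<^sup>L M0 (\<lambda>x. - f x) - \<epsilon> < integral\<^sup>L M (\<lambda>x. - f x)"
    using lower_approximating_integral_lower_bound[OF g M0 bcont_uminus[OF f] \<open>\<epsilon> > 0\<close>] by blast
  show ?thesis
  proof (rule that[of "A1 \<union> A2" "min \<delta>1 \<delta>2"])
    fix M
    assume "finite_borel_measure M"
      and "\<And>m. m \<in> A1 \<union> A2 \<Longrightarrow> \<bar>integral\<^sup>L M (g m) - integral\<^sup>L M0 (g m)\<bar> < min \<delta>1 \<delta>2"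
    with A1(3)[of M] A2(3)[of M] show "\<bar>integral\<^sup>L M f - integral\<^sup>L M0 f\<bar> < \<epsilon>"
      by (auto simp: abs_diff_less_iff)
  qed (use A1 A2 in auto)
qed

lemma lower_approximating_measure_eqI:
  assumes g: "lower_approximating g"
    and M: "finite_borel_measure M" and N: "finite_borel_measure N"
    and eq: "\<And>m. integral\<^sup>L M (g m) = integral\<^sup>L N (g m)"
  shows "M = N"
proof (rule finite_borel_measure_eqI[OF M N])
  fix f :: "'a \<Rightarrow> real"
  assume f: "bcont f"
  show "integral\<^sup>L M f = integral\<^sup>L N f"
  proof (rule ccontr)
    assume "integral\<^sup>L M f \<noteq> integral\<^sup>L N f"
    then have "\<bar>integral\<^sup>L M f - integral\<^sup>L N f\<bar> > 0"
      by simp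
    from lower_approximating_integral_close[OF g N f this] obtain \<delta> A where "\<delta> > 0"
      "\<And>M'. finite_borel_measure M' \<Longrightarrow>
         (\<And>m. m \<in> A \<Longrightarrow> \<bar>integral\<^sup>L M' (g m) - integral\<^sup>L N (g m)\<bar> < \<delta>) \<Longrightarrow>
         \<bar>integral\<^sup>L M' f - integral\<^sup>L N f\<bar> < \<bar>integral\<^sup>L M f - integral\<^sup>L N f\<bar>"
      by metis
    from this(2)[OF M] \<open>\<delta> > 0\<close> eq show False
      by simp
  qed
qed

section \<open>Uniform deviations along weakly continuous paths\<close>

definition sup_dev :: "'b set \<Rightarrow> ('a::metric_space \<Rightarrow> real) \<Rightarrow> ('b \<Rightarrow> 'a measure) \<Rightarrow> ('b \<Rightarrow> 'a measure) \<Rightarrow> real"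
  where "sup_dev K f \<mu> \<nu> = (if K = {} then 0 else (SUP t\<in>K. \<bar>integral\<^sup>L (\<mu> t) f - integral\<^sup>L (\<nu> t) f\<bar>))"

lemma continuous_map_integral_wcont_path:
  "\<mu> \<in> wcont_paths X \<Longrightarrow> bcont f \<Longrightarrow> continuous_map X euclideanreal (\<lambda>t. integral\<^sup>L (\<mu> t) f)"
  unfolding wcont_paths_def by blast

lemma finite_borel_measure_wcont_path:
  "\<mu> \<in> wcont_paths X \<Longrightarrow> t \<in> topspace X \<Longrightarrow> finite_borel_measure (\<mu> t)"
  unfolding wcont_paths_def by blast

lemma wcont_path_undefined: "\<mu> \<in> wcont_paths X \<Longrightarrow> t \<notin> topspace X \<Longrightarrow> \<mu> t = undefined"
  unfolding wcont_paths_def by blast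

lemma bdd_above_integral_dev:
  assumes "\<mu> \<in> wcont_paths X" "\<nu> \<in> wcont_paths X" "bcont f" "compactin X K"
  shows "bdd_above ((\<lambda>t. \<bar>integral\<^sup>L (\<mu> t) f - integral\<^sup>L (\<nu> t) f\<bar>) ` K)"
proof -
  have "continuous_map X euclideanreal (\<lambda>t. \<bar>integral\<^sup>L (\<mu> t) f - integral\<^sup>L (\<nu> t) f\<bar>)"
    using assms by (intro continuous_map_real_abs continuous_map_diff continuous_map_integral_wcont_path)
  with assms(4) have "compact ((\<lambda>t. \<bar>integral\<^sup>L (\<mu> t) f - integral\<^sup>L (\<nu> t) f\<bar>) ` K)"
    using image_compactin by fastforce
  then show ?thesis
    by (intro bounded_imp_bdd_above compact_imp_bounded)
qed

lemma sup_dev_ge: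
  assumes "\<mu> \<in> wcont_paths X" "\<nu> \<in> wcont_paths X" "bcont f" "compactin X K" "t \<in> K"
  shows "\<bar>integral\<^sup>L (\<mu> t) f - integral\<^sup>L (\<nu> t) f\<bar> \<le> sup_dev K f \<mu> \<nu>"
  using cSUP_upper[OF assms(5) bdd_above_integral_dev[OF assms(1-4)]] assms(5)
  unfolding sup_dev_def by auto

lemma sup_dev_le:
  assumes "0 \<le> a" "\<And>t. t \<in> K \<Longrightarrow> \<bar>integral\<^sup>L (\<mu> t) f - integral\<^sup>L (\<nu> t) f\<bar> \<le> a"
  shows "sup_dev K f \<mu> \<nu> \<le> a"
  using assms by (simp add: sup_dev_def cSUP_least)

lemma sup_dev_nonneg:
  assumes "\<mu> \<in> wcont_paths X" "\<nu> \<in> wcont_paths X" "bcont f" "compactin X K"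
  shows "0 \<le> sup_dev K f \<mu> \<nu>"
proof (cases "K = {}")
  case False
  then obtain t where "t \<in> K" by blast
  from sup_dev_ge[OF assms this] show ?thesis by linarith
qed (simp add: sup_dev_def)

lemma sup_dev_commute: "sup_dev K f \<mu> \<nu> = sup_dev K f \<nu> \<mu>"
  unfolding sup_dev_def by (simp add: abs_minus_commute)

lemma sup_dev_self: "sup_dev K f \<mu> \<mu> = 0"
  unfolding sup_dev_def by simp

lemma sup_dev_triangle:
  assumes "\<mu> \<in> wcont_paths X" "\<nu> \<in> wcont_paths X" "\<rho> \<in> wcont_paths X" "bcont f" "compactin X K"
  shows "sup_dev K f \<mu> \<rho> \<le> sup_dev K f \<mu> \<nu> + sup_dev K f \<nu> \<rho>"
proof (rule sup_dev_le)
  show "0 \<le> sup_dev K f \<mu> \<nu> + sup_dev K f \<nu> \<rho>"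
    using sup_dev_nonneg[OF assms(1,2,4,5)] sup_dev_nonneg[OF assms(2,3,4,5)] by simp
  fix t
  assume "t \<in> K"
  from sup_dev_ge[OF assms(1,2,4,5) this] sup_dev_ge[OF assms(2,3,4,5) this]
  show "\<bar>integral\<^sup>L (\<mu> t) f - integral\<^sup>L (\<rho> t) f\<bar> \<le> sup_dev K f \<mu> \<nu> + sup_dev K f \<nu> \<rho>"
    by linarith
qed

lemma sup_dev_less_iff:
  "\<epsilon> > 0 \<Longrightarrow> (K = {} \<or> (SUP t\<in>K. \<bar>integral\<^sup>L (\<mu> t) f - integral\<^sup>L (\<nu> t) f\<bar>) < \<epsilon>) \<longleftrightarrow> sup_dev K f \<mu> \<nu> < \<epsilon>"
  unfolding sup_dev_def by auto

lemma openin_less_continuous_map: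
  "continuous_map X euclideanreal h \<Longrightarrow> openin X {t \<in> topspace X. h t < c}"
  by (simp add: continuous_map_upper_lower_semicontinuous_lt)

lemma wcont_path_local_control:
  assumes g: "lower_approximating g" and \<mu>: "\<mu> \<in> wcont_paths X" and t0: "t0 \<in> topspace X"
    and f: "bcont f" and "\<epsilon> > 0"
  shows "\<exists>W A \<delta>. openin X W \<and> t0 \<in> W \<and> finite A \<and> \<delta> > 0 \<and>
    (\<forall>t\<in>W. \<forall>N. finite_borel_measure N \<longrightarrow>
       (\<forall>m\<in>A. \<bar>integral\<^sup>L N (g m) - integral\<^sup>L (\<mu> t) (g m)\<bar> < \<delta>) \<longrightarrow>
       \<bar>integral\<^sup>L N f - integral\<^sup>L (\<mu> t) f\<bar> < \<epsilon>)"
proof -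
  obtain A \<delta> where A: "finite A" "\<delta> > 0" and close: "\<And>N. finite_borel_measure N \<Longrightarrow>
      (\<And>m. m \<in> A \<Longrightarrow> \<bar>integral\<^sup>L N (g m) - integral\<^sup>L (\<mu> t0) (g m)\<bar> < \<delta>) \<Longrightarrow>
      \<bar>integral\<^sup>L N f - integral\<^sup>L (\<mu> t0) f\<bar> < \<epsilon> / 2"
    using lower_approximating_integral_close[OF g finite_borel_measure_wcont_path[OF \<mu> t0] f, of "\<epsilon> / 2"]
      \<open>\<epsilon> > 0\<close> by auto
  define near where "near h c = {t \<in> topspace X. \<bar>integral\<^sup>L (\<mu> t) h - integral\<^sup>L (\<mu> t0) h\<bar> < c}"
    for h :: "'a \<Rightarrow> real" and c :: real
  have open_near: "openin X (near h c)" if "bcont h" for h c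
    unfolding near_def using \<mu> that
    by (intro openin_less_continuous_map continuous_map_real_abs continuous_map_diff
        continuous_map_integral_wcont_path continuous_map_const[THEN iffD2]) auto
  define W where "W = near f (\<epsilon> / 2) \<inter> ((\<Inter>m\<in>A. near (g m) (\<delta> / 2)) \<inter> topspace X)"
  have "openin X W"
    unfolding W_def using f g A(1) open_near
    by (intro openin_Int openin_INT) (auto simp: lower_approximating_def)
  moreover have "t0 \<in> W"
    using t0 \<open>\<epsilon> > 0\<close> \<open>\<delta> > 0\<close> by (simp add: W_def near_def)
  moreover have "\<bar>integral\<^sup>L N f - integral\<^sup>L (\<mu> t) f\<bar> < \<epsilon>"
    if "t \<in> W" "finite_borel_measure N"
      and "\<forall>m\<in>A. \<bar>integral\<^sup>L N (g m) - integral\<^sup>L (\<mu> t) (g m)\<bar> < \<delta> / 2" for t N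
  proof -
    have "\<bar>integral\<^sup>L N (g m) - integral\<^sup>L (\<mu> t0) (g m)\<bar> < \<delta>" if "m \<in> A" for m
    proof -
      have "\<bar>integral\<^sup>L (\<mu> t) (g m) - integral\<^sup>L (\<mu> t0) (g m)\<bar> < \<delta> / 2"
        using \<open>t \<in> W\<close> that by (simp add: W_def near_def)
      moreover have "\<bar>integral\<^sup>L N (g m) - integral\<^sup>L (\<mu> t) (g m)\<bar> < \<delta> / 2"
        using \<open>\<forall>m\<in>A. _\<close> that by blast
      ultimately show ?thesis
        by linarith
    qed
    then have "\<bar>integral\<^sup>L N f - integral\<^sup>L (\<mu> t0) f\<bar> < \<epsilon> / 2"
      by (rule close[OF \<open>finite_borel_measure N\<close>])
    moreover have "\<bar>integral\<^sup>L (\<mu> t) f - integral\<^sup>L (\<mu> t0) f\<bar> < \<epsilon> / 2"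
      using \<open>t \<in> W\<close> by (simp add: W_def near_def)
    ultimately show ?thesis
      by linarith
  qed
  ultimately show ?thesis
    using A by (intro exI[of _ W] exI[of _ A] exI[of _ "\<delta> / 2"]) auto
qed

lemma wcont_path_compact_control:
  assumes g: "lower_approximating g" and \<mu>: "\<mu> \<in> wcont_paths X" and K: "compactin X K"
    and f: "bcont f" and "\<epsilon> > 0"
  shows "\<exists>A \<delta>. finite A \<and> \<delta> > 0 \<and>
    (\<forall>t\<in>K. \<forall>N. finite_borel_measure N \<longrightarrow>
       (\<forall>m\<in>A. \<bar>integral\<^sup>L N (g m) - integral\<^sup>L (\<mu> t) (g m)\<bar> < \<delta>) \<longrightarrow>
       \<bar>integral\<^sup>L N f - integral\<^sup>L (\<mu> t) f\<bar> < \<epsilon>)"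
proof -
  define controls where "controls W A \<delta> \<longleftrightarrow> openin X W \<and> finite A \<and> \<delta> > 0 \<and>
    (\<forall>t\<in>W. \<forall>N. finite_borel_measure N \<longrightarrow>
       (\<forall>m\<in>A. \<bar>integral\<^sup>L N (g m) - integral\<^sup>L (\<mu> t) (g m)\<bar> < \<delta>) \<longrightarrow>
       \<bar>integral\<^sup>L N f - integral\<^sup>L (\<mu> t) f\<bar> < \<epsilon>)" for W A and \<delta> :: real
  have "\<forall>t\<in>K. \<exists>W A \<delta>. t \<in> W \<and> controls W A \<delta>"
  proof
    fix t
    assume "t \<in> K"
    with compactin_subset_topspace[OF K] have "t \<in> topspace X"
      by blast
    from wcont_path_local_control[OF g \<mu> this f \<open>\<epsilon> > 0\<close>]
    show "\<exists>W A \<delta>. t \<in> W \<and> controls W A \<delta>"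
      unfolding controls_def by (elim exE) (intro exI, blast)
  qed
  then obtain W A \<delta> where W: "\<And>t. t \<in> K \<Longrightarrow> t \<in> W t \<and> controls (W t) (A t) (\<delta> t)"
    by metis
  obtain F where F: "finite F" "F \<subseteq> W ` K" "K \<subseteq> \<Union>F"
    using compactinD[OF K, of "W ` K"] W unfolding controls_def by blast
  then obtain K0 where K0: "K0 \<subseteq> K" "finite K0" "K \<subseteq> (\<Union>t\<in>K0. W t)"
    using finite_subset_image[OF F(1,2)] by blast
  define \<delta>0 where "\<delta>0 = Min (insert 1 (\<delta> ` K0))"
  have "\<delta>0 > 0"
    unfolding \<delta>0_def using K0 W by (auto simp: controls_def)
  have \<delta>0_le: "\<delta>0 \<le> \<delta> t" if "t \<in> K0" for t
    unfolding \<delta>0_def using K0(2) that by simp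
  have "\<bar>integral\<^sup>L N f - integral\<^sup>L (\<mu> t) f\<bar> < \<epsilon>"
    if "t \<in> K" "finite_borel_measure N"
      and close: "\<forall>m\<in>(\<Union>s\<in>K0. A s). \<bar>integral\<^sup>L N (g m) - integral\<^sup>L (\<mu> t) (g m)\<bar> < \<delta>0" for t N
  proof -
    obtain s where "s \<in> K0" "t \<in> W s"
      using K0(3) \<open>t \<in> K\<close> by blast
    moreover have "\<forall>m\<in>A s. \<bar>integral\<^sup>L N (g m) - integral\<^sup>L (\<mu> t) (g m)\<bar> < \<delta> s"
      using close \<delta>0_le \<open>s \<in> K0\<close> by fastforce
    ultimately show ?thesis
      using W[of s] K0(1) \<open>finite_borel_measure N\<close> unfolding controls_def by blast
  qed
  moreover have "finite (\<Union>s\<in>K0. A s)"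
    using K0 W by (auto simp: controls_def)
  ultimately show ?thesis
    using \<open>\<delta>0 > 0\<close> by blast
qed

section \<open>Compact exhaustions\<close>

lemma compactin_subset_interior_of_compactin:
  assumes "locally_compact_space X" "compactin X K"
  shows "\<exists>K'. compactin X K' \<and> K \<subseteq> X interior_of K'"
proof -
  have "K \<subseteq> topspace X"
    using assms(2) by (rule compactin_subset_topspace)
  with assms(1) have "\<forall>x\<in>K. \<exists>U C. openin X U \<and> compactin X C \<and> x \<in> U \<and> U \<subseteq> C"
    unfolding locally_compact_space_def by blast
  then obtain U C where UC: "\<forall>x\<in>K. openin X (U x) \<and> compactin X (C x) \<and> x \<in> U x \<and> U x \<subseteq> C x"
    by metis
  obtain F where F: "finite F" "F \<subseteq> U ` K" "K \<subseteq> \<Union>F"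
    using compactinD[OF assms(2), of "U ` K"] UC by blast
  then obtain K0 where K0: "K0 \<subseteq> K" "finite K0" "K \<subseteq> \<Union>(U ` K0)"
    using finite_subset_image[OF F(1,2)] by blast
  have "\<Union>(U ` K0) \<subseteq> X interior_of \<Union>(C ` K0)"
    using K0(1) UC by (intro interior_of_maximal openin_Union) auto
  moreover have "compactin X (\<Union>(C ` K0))"
    using K0 UC by (intro compactin_Union) auto
  ultimately show ?thesis
    using K0(3) by blast
qed

lemma compactin_subset_exhaustion:
  assumes mono: "\<And>n. L n \<subseteq> L (Suc n)" and cover: "topspace X \<subseteq> (\<Union>n. X interior_of L n)"
    and K: "compactin X K"
  shows "\<exists>n. K \<subseteq> L n"
proof -
  have cover_K: "K \<subseteq> \<Union>(range (\<lambda>n. X interior_of L n))"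
    using cover compactin_subset_topspace[OF K] by blast
  have "openin X U" if "U \<in> range (\<lambda>n. X interior_of L n)" for U
    using that by auto
  then obtain F where F: "finite F" "F \<subseteq> range (\<lambda>n. X interior_of L n)" "K \<subseteq> \<Union>F"
    using compactinD[OF K _ cover_K] by blast
  then obtain N where N: "finite N" "F = (\<lambda>n. X interior_of L n) ` N"
    using finite_subset_image[OF F(1,2)] by blast
  define n where "n = Max (insert 0 N)"
  have "X interior_of L i \<subseteq> L n" if "i \<in> N" for i
  proof -
    have "i \<le> n" using N(1) that by (simp add: n_def)
    then have "L i \<subseteq> L n" by (rule lift_Suc_mono_le[of L, OF mono])
    with interior_of_subset[of X "L i"] show ?thesis by (rule order_trans)
  qed
  then have "(\<Union>i\<in>N. X interior_of L i) \<subseteq> L n"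
    by (rule UN_least)
  with F(3) have "K \<subseteq> L n"
    unfolding N(2) by (rule order_trans)
  then show ?thesis ..
qed

lemma sigma_compact_locally_compact_exhaustion:
  assumes "sigma_compact_space X" "locally_compact_space X"
  obtains L :: "nat \<Rightarrow> 'a set"
  where "\<And>n. compactin X (L n)" "\<And>K. compactin X K \<Longrightarrow> \<exists>n. K \<subseteq> L n"
proof -
  obtain F where F: "countable F" "\<forall>K\<in>F. compactin X K" "\<Union>F = topspace X"
    using assms(1) unfolding sigma_compact_space_def by (elim exE conjE)
  txt \<open>Adding the empty set keeps F nonempty (F itself is empty when T is).\<close>
  define C where "C = from_nat_into (insert {} F)"
  have range_C: "range C = insert {} F"
    unfolding C_def using F(1) by (simp add: range_from_nat_into)
  have C: "compactin X (C n)" for n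
  proof -
    have "C n \<in> insert {} F" using range_C by blast
    then show ?thesis using F(2) by auto
  qed
  have C_cover: "(\<Union>n. C n) = topspace X"
    using range_C F(3) by simp
  have "\<forall>K. \<exists>K'. compactin X K \<longrightarrow> compactin X K' \<and> K \<subseteq> X interior_of K'"
    using compactin_subset_interior_of_compactin[OF assms(2)] by blast
  then have "\<exists>E. \<forall>K. compactin X K \<longrightarrow> compactin X (E K) \<and> K \<subseteq> X interior_of E K"
    by (rule choice)
  then obtain E where E: "\<And>K. compactin X K \<Longrightarrow> compactin X (E K) \<and> K \<subseteq> X interior_of E K"
    by blast
  define L where "L = rec_nat {} (\<lambda>n A. E (A \<union> C n))"
  have L_0: "L 0 = {}" and L_Suc: "L (Suc n) = E (L n \<union> C n)" for n
    by (simp_all add: L_def)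
  have compact: "compactin X (L n)" for n
  proof (induction n)
    case (Suc n)
    then show ?case using E[OF compactin_Un[OF Suc C]] by (simp add: L_Suc)
  qed (simp add: L_0)
  have interior: "L n \<union> C n \<subseteq> X interior_of L (Suc n)" for n
    using E[OF compactin_Un[OF compact C]] by (simp add: L_Suc)
  show ?thesis
  proof (rule that[OF compact compactin_subset_exhaustion])
    show "L n \<subseteq> L (Suc n)" for n
      using interior[of n] interior_of_subset[of X "L (Suc n)"] by blast
    show "topspace X \<subseteq> (\<Union>n. X interior_of L n)"
    proof
      fix x
      assume "x \<in> topspace X"
      then obtain n where "x \<in> C n"
        using C_cover by blast
      with interior[of n] show "x \<in> (\<Union>n. X interior_of L n)"
        by blast
    qed
  qed
qed

section \<open>The metric\<close>

locale lu_pseudometric =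
  fixes X :: "'b topology" and L :: "nat \<Rightarrow> 'b set" and g :: "nat \<Rightarrow> 'a::metric_space \<Rightarrow> real"
  assumes compactin_L: "\<And>n. compactin X (L n)" and bcont_g: "\<And>m. bcont (g m)"
begin

abbreviation paths :: "('b \<Rightarrow> 'a measure) set"
  where "paths \<equiv> wcont_paths X"

text \<open>The summands run through all pairs (L n, g m), enumerated by prod_decode. The guard in
  lu_dist is there because Metric_space demands nonnegativity and symmetry off the carrier too.\<close>
definition lu_term :: "('b \<Rightarrow> 'a measure) \<Rightarrow> ('b \<Rightarrow> 'a measure) \<Rightarrow> nat \<Rightarrow> real" where
  "lu_term \<mu> \<nu> j = (1/2) ^ j * min 1 (sup_dev (L (fst (prod_decode j))) (g (snd (prod_decode j))) \<mu> \<nu>)"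

definition lu_dist :: "('b \<Rightarrow> 'a measure) \<Rightarrow> ('b \<Rightarrow> 'a measure) \<Rightarrow> real" where
  "lu_dist \<mu> \<nu> = (if \<mu> \<in> paths \<and> \<nu> \<in> paths then \<Sum>j. lu_term \<mu> \<nu> j else 0)"

lemma lu_term_nonneg: "\<mu> \<in> paths \<Longrightarrow> \<nu> \<in> paths \<Longrightarrow> 0 \<le> lu_term \<mu> \<nu> j"
  unfolding lu_term_def using sup_dev_nonneg[OF _ _ bcont_g compactin_L] by simp

lemma lu_term_le: "lu_term \<mu> \<nu> j \<le> (1/2) ^ j"
  unfolding lu_term_def by (simp add: mult_left_le)

lemma summable_lu_term: "\<mu> \<in> paths \<Longrightarrow> \<nu> \<in> paths \<Longrightarrow> summable (lu_term \<mu> \<nu>)"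
  by (rule summable_comparison_test'[OF summable_geometric[of "1/2 :: real"]])
    (use lu_term_nonneg lu_term_le in auto)

lemma lu_term_commute: "lu_term \<mu> \<nu> = lu_term \<nu> \<mu>"
  unfolding lu_term_def by (simp add: sup_dev_commute fun_eq_iff)

lemma lu_dist_nonneg: "0 \<le> lu_dist \<mu> \<nu>"
  unfolding lu_dist_def using suminf_nonneg[OF summable_lu_term lu_term_nonneg] by simp

lemma lu_dist_commute: "lu_dist \<mu> \<nu> = lu_dist \<nu> \<mu>"
  unfolding lu_dist_def by (simp add: lu_term_commute conj_commute)

lemma lu_dist_self: "lu_dist \<mu> \<mu> = 0"
  unfolding lu_dist_def lu_term_def by (simp add: sup_dev_self)

lemma lu_term_le_lu_dist: "\<mu> \<in> paths \<Longrightarrow> \<nu> \<in> paths \<Longrightarrow> lu_term \<mu> \<nu> j \<le> lu_dist \<mu> \<nu>"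
  unfolding lu_dist_def
  using sum_le_suminf[OF summable_lu_term, of \<mu> \<nu> "{j}"] lu_term_nonneg by auto

lemma lu_dist_triangle:
  assumes "\<mu> \<in> paths" "\<nu> \<in> paths" "\<rho> \<in> paths"
  shows "lu_dist \<mu> \<rho> \<le> lu_dist \<mu> \<nu> + lu_dist \<nu> \<rho>"
proof -
  have "lu_term \<mu> \<rho> j \<le> lu_term \<mu> \<nu> j + lu_term \<nu> \<rho> j" for j
  proof -
    let ?K = "L (fst (prod_decode j))" and ?f = "g (snd (prod_decode j))"
    have "sup_dev ?K ?f \<mu> \<rho> \<le> sup_dev ?K ?f \<mu> \<nu> + sup_dev ?K ?f \<nu> \<rho>"
      "0 \<le> sup_dev ?K ?f \<mu> \<nu>" "0 \<le> sup_dev ?K ?f \<nu> \<rho>"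
      using sup_dev_triangle[OF assms bcont_g compactin_L]
        sup_dev_nonneg[OF _ _ bcont_g compactin_L] assms by auto
    then have "min 1 (sup_dev ?K ?f \<mu> \<rho>) \<le> min 1 (sup_dev ?K ?f \<mu> \<nu>) + min 1 (sup_dev ?K ?f \<nu> \<rho>)"
      by linarith
    then show ?thesis
      unfolding lu_term_def distrib_left[symmetric] by (intro mult_left_mono) auto
  qed
  then have "(\<Sum>j. lu_term \<mu> \<rho> j) \<le> (\<Sum>j. lu_term \<mu> \<nu> j + lu_term \<nu> \<rho> j)"
    by (intro suminf_le summable_add summable_lu_term assms)
  also have "\<dots> = (\<Sum>j. lu_term \<mu> \<nu> j) + (\<Sum>j. lu_term \<nu> \<rho> j)"
    by (intro suminf_add[symmetric] summable_lu_term assms)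
  finally show ?thesis
    using assms by (simp add: lu_dist_def)
qed

lemma sup_dev_less_if_lu_dist_less:
  assumes "\<mu> \<in> paths" "\<nu> \<in> paths" "lu_dist \<mu> \<nu> < (1/2) ^ prod_encode (n, m) * min 1 \<delta>"
  shows "sup_dev (L n) (g m) \<mu> \<nu> < \<delta>"
proof -
  have "lu_term \<mu> \<nu> (prod_encode (n, m)) < (1/2) ^ prod_encode (n, m) * min 1 \<delta>"
    using lu_term_le_lu_dist[OF assms(1,2)] assms(3) by (rule le_less_trans)
  then have "min 1 (sup_dev (L n) (g m) \<mu> \<nu>) < min 1 \<delta>"
    by (simp add: lu_term_def)
  then show ?thesis
    by (auto simp: min_def split: if_splits)
qed

lemma lu_dist_less_if_sup_dev_less:
  assumes "\<mu> \<in> paths" "\<nu> \<in> paths" and J: "(1/2) ^ J < r / 4"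
    and less: "\<And>j. j < J \<Longrightarrow> sup_dev (L (fst (prod_decode j))) (g (snd (prod_decode j))) \<mu> \<nu> < r / 4"
  shows "lu_dist \<mu> \<nu> < r"
proof -
  have "r > 0"
    using J zero_less_power[of "1/2 :: real" J] by linarith
  have geometric: "summable (\<lambda>j. (1/2 :: real) ^ j)" "(\<Sum>j. (1/2 :: real) ^ j) = 2"
    using summable_geometric[of "1/2 :: real"] suminf_geometric[of "1/2 :: real"] by simp_all
  have "lu_term \<mu> \<nu> (j + J) \<le> (1/2) ^ J * (1/2) ^ j" for j
    using lu_term_le[of \<mu> \<nu> "j + J"] by (simp add: power_add mult.commute)
  then have "(\<Sum>j. lu_term \<mu> \<nu> (j + J)) \<le> (\<Sum>j. (1/2) ^ J * (1/2) ^ j)"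
    by (intro suminf_le summable_ignore_initial_segment summable_lu_term assms(1,2)
        summable_mult geometric(1))
  also have "\<dots> = (1/2) ^ J * 2"
    using suminf_mult[OF geometric(1)] geometric(2) by simp
  finally have tail: "(\<Sum>j. lu_term \<mu> \<nu> (j + J)) < r / 2"
    using J by linarith
  have "(\<Sum>j<J. lu_term \<mu> \<nu> j) \<le> (\<Sum>j<J. r / 4 * (1/2) ^ j)"
    using less by (intro sum_mono) (fastforce simp: lu_term_def mult.commute intro: mult_left_mono)
  also have "\<dots> \<le> (\<Sum>j. r / 4 * (1/2) ^ j)"
    using \<open>r > 0\<close> summable_mult[OF geometric(1)] by (intro sum_le_suminf) auto
  also have "\<dots> = r / 2"
    using suminf_mult[OF geometric(1), of "r / 4"] geometric(2) by simp
  finally have "(\<Sum>j<J. lu_term \<mu> \<nu> j) \<le> r / 2" .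
  with tail suminf_split_initial_segment[OF summable_lu_term[OF assms(1,2)], of J] assms(1,2)
  show ?thesis
    by (simp add: lu_dist_def)
qed

end

locale lu_metrization = lu_pseudometric X L g
  for X :: "'b topology" and L and g :: "nat \<Rightarrow> 'a::metric_space \<Rightarrow> real" +
  assumes exhausting: "\<And>K. compactin X K \<Longrightarrow> \<exists>n. K \<subseteq> L n"
    and lower_approximating_g: "lower_approximating g"
begin

lemma lu_dist_eq_0_imp_eq:
  assumes \<mu>: "\<mu> \<in> paths" and \<nu>: "\<nu> \<in> paths" and "lu_dist \<mu> \<nu> = 0"
  shows "\<mu> = \<nu>"
proof
  fix t
  show "\<mu> t = \<nu> t"
  proof (cases "t \<in> topspace X")
    case True
    then obtain n where "t \<in> L n"
      using exhausting[of "{t}"] by auto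
    have "integral\<^sup>L (\<mu> t) (g m) = integral\<^sup>L (\<nu> t) (g m)" for m
    proof -
      have "sup_dev (L n) (g m) \<mu> \<nu> < \<delta>" if "\<delta> > 0" for \<delta>
        using sup_dev_less_if_lu_dist_less[OF \<mu> \<nu>] \<open>lu_dist \<mu> \<nu> = 0\<close> that by simp
      then have "sup_dev (L n) (g m) \<mu> \<nu> \<le> 0"
        by (meson not_le less_irrefl)
      with sup_dev_ge[OF \<mu> \<nu> bcont_g[of m] compactin_L \<open>t \<in> L n\<close>] show ?thesis
        by linarith
    qed
    then show ?thesis
      using lower_approximating_measure_eqI[OF lower_approximating_g] 
        finite_borel_measure_wcont_path[OF \<mu> True] finite_borel_measure_wcont_path[OF \<nu> True]
      by blast
  qed (use wcont_path_undefined[OF \<mu>] wcont_path_undefined[OF \<nu>] in auto)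
qed

sublocale lu: Metric_space paths lu_dist
  by unfold_locales
    (auto simp: lu_dist_nonneg lu_dist_commute lu_dist_self intro: lu_dist_eq_0_imp_eq lu_dist_triangle)

lemma sup_dev_small_near:
  assumes \<mu>: "\<mu> \<in> paths" and K: "compactin X K" and f: "bcont f" and "\<epsilon> > 0"
  shows "\<exists>r>0. \<forall>\<nu>\<in>paths. lu_dist \<mu> \<nu> < r \<longrightarrow> sup_dev K f \<mu> \<nu> < \<epsilon>"
proof -
  obtain n where "K \<subseteq> L n"
    using exhausting[OF K] by blast
  obtain A \<delta> where A: "finite A" "\<delta> > 0" and control: "\<forall>t\<in>K. \<forall>N. finite_borel_measure N \<longrightarrow>
       (\<forall>m\<in>A. \<bar>integral\<^sup>L N (g m) - integral\<^sup>L (\<mu> t) (g m)\<bar> < \<delta>) \<longrightarrow>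
       \<bar>integral\<^sup>L N f - integral\<^sup>L (\<mu> t) f\<bar> < \<epsilon> / 2"
    using wcont_path_compact_control[OF lower_approximating_g \<mu> K f, of "\<epsilon> / 2"] \<open>\<epsilon> > 0\<close> by auto
  define r where "r = Min (insert 1 ((\<lambda>m. (1/2) ^ prod_encode (n, m) * min 1 \<delta>) ` A))"
  have "r > 0"
    unfolding r_def using A by simp
  have r_le: "r \<le> (1/2) ^ prod_encode (n, m) * min 1 \<delta>" if "m \<in> A" for m
    unfolding r_def using A(1) that by (intro Min_le) auto
  have "sup_dev K f \<mu> \<nu> < \<epsilon>" if \<nu>: "\<nu> \<in> paths" and "lu_dist \<mu> \<nu> < r" for \<nu>
  proof -
    have "\<bar>integral\<^sup>L (\<nu> t) f - integral\<^sup>L (\<mu> t) f\<bar> < \<epsilon> / 2" if "t \<in> K" for t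
    proof -
      have "t \<in> topspace X" "t \<in> L n"
        using compactin_subset_topspace[OF K] \<open>K \<subseteq> L n\<close> that by auto
      have "\<bar>integral\<^sup>L (\<nu> t) (g m) - integral\<^sup>L (\<mu> t) (g m)\<bar> < \<delta>" if "m \<in> A" for m
      proof -
        have "sup_dev (L n) (g m) \<mu> \<nu> < \<delta>"
          using \<open>lu_dist \<mu> \<nu> < r\<close> r_le[OF that] by (intro sup_dev_less_if_lu_dist_less[OF \<mu> \<nu>]) simp
        with sup_dev_ge[OF \<mu> \<nu> bcont_g[of m] compactin_L \<open>t \<in> L n\<close>] show ?thesis
          by linarith
      qed
      then show ?thesis
        using control \<open>t \<in> K\<close> finite_borel_measure_wcont_path[OF \<nu> \<open>t \<in> topspace X\<close>] by blast
    qed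
    then have "sup_dev K f \<mu> \<nu> \<le> \<epsilon> / 2"
      using \<open>\<epsilon> > 0\<close> by (intro sup_dev_le) (auto simp: abs_minus_commute less_imp_le)
    with \<open>\<epsilon> > 0\<close> show ?thesis
      by linarith
  qed
  with \<open>r > 0\<close> show ?thesis
    by blast
qed

lemma lu_uniformity_contains_ball:
  assumes E: "E \<in> lu_uniformity X" and \<mu>: "\<mu> \<in> paths"
  shows "\<exists>r>0. \<forall>\<nu>\<in>paths. lu_dist \<mu> \<nu> < r \<longrightarrow> (\<mu>, \<nu>) \<in> E"
proof -
  obtain F where F: "finite F" "F \<subseteq> lu_subbase X" "(paths \<times> paths) \<inter> \<Inter>F \<subseteq> E"
    using E unfolding lu_uniformity_def by blast
  have "\<exists>r>0. \<forall>\<nu>\<in>paths. lu_dist \<mu> \<nu> < r \<longrightarrow> (\<mu>, \<nu>) \<in> V" if "V \<in> lu_subbase X" for V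
  proof -
    obtain K f \<epsilon> where "compactin X K" "bcont f" "\<epsilon> > 0"
      and V: "V = {(\<mu>, \<nu>) \<in> paths \<times> paths.
        K = {} \<or> (SUP t\<in>K. \<bar>integral\<^sup>L (\<mu> t) f - integral\<^sup>L (\<nu> t) f\<bar>) < \<epsilon>}"
      using \<open>V \<in> lu_subbase X\<close> unfolding lu_subbase_def by blast
    then have "V = {(\<mu>, \<nu>) \<in> paths \<times> paths. sup_dev K f \<mu> \<nu> < \<epsilon>}"
      by (simp only: sup_dev_less_iff)
    with sup_dev_small_near[OF \<mu> \<open>compactin X K\<close> \<open>bcont f\<close> \<open>\<epsilon> > 0\<close>] \<mu> show ?thesis
      by auto
  qed
  then obtain R where R: "\<forall>V\<in>F. R V > 0 \<and> (\<forall>\<nu>\<in>paths. lu_dist \<mu> \<nu> < R V \<longrightarrow> (\<mu>, \<nu>) \<in> V)"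
    using F(2) by (metis subsetD)
  define r where "r = Min (insert 1 (R ` F))"
  have "r > 0"
    unfolding r_def using F(1) R by simp
  moreover have "(\<mu>, \<nu>) \<in> E" if "\<nu> \<in> paths" "lu_dist \<mu> \<nu> < r" for \<nu>
  proof -
    have "(\<mu>, \<nu>) \<in> V" if "V \<in> F" for V
      using R \<open>V \<in> F\<close> \<open>\<nu> \<in> paths\<close> \<open>lu_dist \<mu> \<nu> < r\<close> Min_le[of "insert 1 (R ` F)" "R V"] F(1)
      unfolding r_def by fastforce
    with F(3) \<mu> \<open>\<nu> \<in> paths\<close> show ?thesis
      by blast
  qed
  ultimately show ?thesis
    by blast
qed

lemma ball_contains_lu_uniformity_nbhd:
  assumes \<mu>: "\<mu> \<in> paths" and "r > 0"
  shows "\<exists>E\<in>lu_uniformity X. \<forall>\<nu>. (\<mu>, \<nu>) \<in> E \<longrightarrow> \<nu> \<in> paths \<and> lu_dist \<mu> \<nu> < r"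
proof -
  obtain J where J: "(1/2 :: real) ^ J < r / 4"
    using real_arch_pow_inv[of "r / 4" "1/2"] \<open>r > 0\<close> by auto
  define V where "V j = {(\<mu>, \<nu>) \<in> paths \<times> paths. L (fst (prod_decode j)) = {} \<or>
    (SUP t\<in>L (fst (prod_decode j)). \<bar>integral\<^sup>L (\<mu> t) (g (snd (prod_decode j)))
       - integral\<^sup>L (\<nu> t) (g (snd (prod_decode j)))\<bar>) < r / 4}" for j
  have "V j \<in> lu_subbase X" for j
    unfolding lu_subbase_def V_def
    by (intro CollectI exI[of _ "L (fst (prod_decode j))"] exI[of _ "g (snd (prod_decode j))"]
        exI[of _ "r / 4"]) (use compactin_L bcont_g \<open>r > 0\<close> in auto)
  then have E: "(paths \<times> paths) \<inter> \<Inter>(V ` {..<J}) \<in> lu_uniformity X"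
    unfolding lu_uniformity_def by blast
  have "\<nu> \<in> paths \<and> lu_dist \<mu> \<nu> < r" if "(\<mu>, \<nu>) \<in> (paths \<times> paths) \<inter> \<Inter>(V ` {..<J})" for \<nu>
  proof -
    have "\<nu> \<in> paths" using that by blast
    moreover have "sup_dev (L (fst (prod_decode j))) (g (snd (prod_decode j))) \<mu> \<nu> < r / 4" if "j < J" for j
    proof -
      have "(\<mu>, \<nu>) \<in> V j"
        using \<open>(\<mu>, \<nu>) \<in> _\<close> that by blast
      then show ?thesis
        using sup_dev_less_iff[of "r / 4" "L (fst (prod_decode j))" \<mu> "g (snd (prod_decode j))" \<nu>]
          \<open>r > 0\<close> by (simp add: V_def)
    qed
    ultimately show ?thesis
      using lu_dist_less_if_sup_dev_less[OF \<mu> _ J] by blast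
  qed
  with E show ?thesis
    by blast
qed

lemma lu_topology_eq_mtopology: "lu_topology X = lu.mtopology"
proof -
  have "(\<lambda>U. U \<subseteq> paths \<and> (\<forall>\<mu>\<in>U. \<exists>E\<in>lu_uniformity X. {\<nu>. (\<mu>, \<nu>) \<in> E} \<subseteq> U)) = openin lu.mtopology"
  proof (intro ext iffI)
    fix U
    assume U: "U \<subseteq> paths \<and> (\<forall>\<mu>\<in>U. \<exists>E\<in>lu_uniformity X. {\<nu>. (\<mu>, \<nu>) \<in> E} \<subseteq> U)"
    have "\<exists>r>0. lu.mball \<mu> r \<subseteq> U" if "\<mu> \<in> U" for \<mu>
    proof -
      obtain E where E: "E \<in> lu_uniformity X" "{\<nu>. (\<mu>, \<nu>) \<in> E} \<subseteq> U"
        using U \<open>\<mu> \<in> U\<close> by blast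
      moreover have "\<mu> \<in> paths"
        using U \<open>\<mu> \<in> U\<close> by blast
      ultimately obtain r where "r > 0" "\<forall>\<nu>\<in>paths. lu_dist \<mu> \<nu> < r \<longrightarrow> (\<mu>, \<nu>) \<in> E"
        using lu_uniformity_contains_ball by blast
      with E(2) show ?thesis
        by (intro exI[of _ r]) (auto simp: lu.in_mball)
    qed
    with U show "openin lu.mtopology U"
      by (simp add: lu.openin_mtopology)
  next
    fix U
    assume "openin lu.mtopology U"
    then have U: "U \<subseteq> paths" "\<And>\<mu>. \<mu> \<in> U \<Longrightarrow> \<exists>r>0. lu.mball \<mu> r \<subseteq> U"
      by (auto simp: lu.openin_mtopology)
    have "\<exists>E\<in>lu_uniformity X. {\<nu>. (\<mu>, \<nu>) \<in> E} \<subseteq> U" if "\<mu> \<in> U" for \<mu>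
    proof -
      obtain r where "r > 0" and ball: "lu.mball \<mu> r \<subseteq> U"
        using U(2) \<open>\<mu> \<in> U\<close> by blast
      moreover have "\<mu> \<in> paths"
        using U(1) \<open>\<mu> \<in> U\<close> by blast
      ultimately obtain E where "E \<in> lu_uniformity X"
        and "\<forall>\<nu>. (\<mu>, \<nu>) \<in> E \<longrightarrow> \<nu> \<in> paths \<and> lu_dist \<mu> \<nu> < r"
        using ball_contains_lu_uniformity_nbhd by blast
      with ball \<open>\<mu> \<in> paths\<close> show ?thesis
        by (intro bexI[of _ E]) (auto simp: lu.in_mball)
    qed
    with U(1) show "U \<subseteq> paths \<and> (\<forall>\<mu>\<in>U. \<exists>E\<in>lu_uniformity X. {\<nu>. (\<mu>, \<nu>) \<in> E} \<subseteq> U)"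
      by blast
  qed
  then show ?thesis
    unfolding lu_topology_def by (simp add: openin_inverse)
qed

end

theorem proposition2p2:
  fixes X :: "'b topology"
  assumes "separable_space (euclidean :: 'a::metric_space topology)"
    and "sigma_compact_space X"
    and "locally_compact_space X"
  shows "metrizable_space (lu_topology X :: ('b \<Rightarrow> 'a measure) topology)"
proof -
  obtain g :: "nat \<Rightarrow> 'a \<Rightarrow> real" where "lower_approximating g"
    using separable_lower_approximating[OF assms(1)] by blast
  moreover obtain L :: "nat \<Rightarrow> 'b set"
    where "\<And>n. compactin X (L n)" "\<And>K. compactin X K \<Longrightarrow> \<exists>n. K \<subseteq> L n"
    using sigma_compact_locally_compact_exhaustion[OF assms(2,3)] by blast
  ultimately interpret lu_metrization X L g
    by unfold_locales (auto simp: lower_approximating_def)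
  show ?thesis
    unfolding lu_topology_eq_mtopology by (rule lu.metrizable_space_mtopology)
qed

end
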